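(* Let $E$ be a real symmetric $(n+m)\times(n+m)$ matrix. The following are equivalent: (a) $E\in\mathcal{E}_{n+m}$, i.e. there exist real unit vectors $a_1,\ldots,a_n,b_1,\ldots,b_m$ (in some $\mathbb{R}^r$) with $E={\rm Gram}(a_1,\ldots,a_n,b_1,\ldots,b_m)$. (b) There exist $d\ge 1$ and $d\times d$ Hermitian matrices $A_1,\ldots,A_n,B_1,\ldots,B_m$ such that (i) $E={\rm Gram}(A_1,\ldots,A_n,B_1,\ldots,B_m)$ and (ii) $A_i^2=B_j^2=\frac1d I_d$ for all $i\in\{1,\ldots,n\}$, $j\in\{1,\ldots,m\}$. (c) There exist $d\ge1$ and $d\times d$ Hermitian matrices $X_1,\ldots,X_n,Y_1,\ldots,Y_m,K$ such that (i) $E={\rm Gram}(KX_1,\ldots,KX_n,Y_1K,\ldots,Y_mK)$; (ii) $X_i^2=Y_j^2=I_d$ for all $i\in\{1,\ldots,n\}$, $j\in\{1,\ldots,m\}$; (iii) $\mathrm{Tr}(K^2)=1$ and $K$ is positive definite.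
   Context: $\mathcal{E}_{N}$ denotes the elliptope: the set of real symmetric positive semidefinite $N\times N$ matrices with all diagonal entries equal to $1$. For real vectors, ${\rm Gram}(v_1,\ldots,v_N)$ is the matrix with entries $\langle v_i,v_j\rangle$; for $d\times d$ complex matrices $M_1,\ldots,M_N$, ${\rm Gram}(M_1,\ldots,M_N)$ is the $N\times N$ matrix with $(i,j)$ entry $\mathrm{Tr}(M_iM_j^* )$. *)

theory Defs
  imports "Jordan_Normal_Form.Matrix"
begin

definition mtrace :: "'a::comm_ring_1 mat \<Rightarrow> 'a" where
  "mtrace A = (\<Sum>i<dim_row A. A $$ (i,i))"

definition ctrans :: "complex mat \<Rightarrow> complex mat" where
  "ctrans A = mat (dim_col A) (dim_row A) (\<lambda>(i,j). cnj (A $$ (j,i)))"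

definition hermitian :: "complex mat \<Rightarrow> bool" where
  "hermitian A \<longleftrightarrow> A \<in> carrier_mat (dim_row A) (dim_row A) \<and> ctrans A = A"

definition pos_def :: "complex mat \<Rightarrow> bool" where
  "pos_def K \<longleftrightarrow> hermitian K \<and>
     (\<forall>v \<in> carrier_vec (dim_row K). v \<noteq> 0\<^sub>v (dim_row K) \<longrightarrow>
        0 < Re (conjugate v \<bullet> (K *\<^sub>v v)))"

definition psd_real :: "nat \<Rightarrow> real mat \<Rightarrow> bool" where
  "psd_real N E \<longleftrightarrow> E \<in> carrier_mat N N \<and> transpose_mat E = E \<and>
     (\<forall>v \<in> carrier_vec N. 0 \<le> v \<bullet> (E *\<^sub>v v))"

definition elliptope :: "nat \<Rightarrow> real mat set" where
  "elliptope N = {E. psd_real N E \<and> (\<forall>i<N. E $$ (i,i) = 1)}"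

definition concat_fam :: "nat \<Rightarrow> (nat \<Rightarrow> 'a) \<Rightarrow> (nat \<Rightarrow> 'a) \<Rightarrow> nat \<Rightarrow> 'a" where
  "concat_fam n x y k = (if k < n then x k else y (k - n))"

definition gram_vec :: "nat \<Rightarrow> (nat \<Rightarrow> real vec) \<Rightarrow> real mat" where
  "gram_vec N v = mat N N (\<lambda>(i,j). v i \<bullet> v j)"

definition gram_mat :: "nat \<Rightarrow> (nat \<Rightarrow> complex mat) \<Rightarrow> complex mat" where
  "gram_mat N M = mat N N (\<lambda>(i,j). mtrace (M i * ctrans (M j)))"

definition complex_of_mat :: "real mat \<Rightarrow> complex mat" where
  "complex_of_mat E = map_mat complex_of_real E"

end

theory Submission
  imports Defs
begin

text \<open>
  A Gram matrix of real unit vectors is positive semidefinite with unit diagonal, and conversely a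
  positive semidefinite matrix factors as a Gram matrix by the Cholesky-type induction that splits
  off the Schur complement of the last diagonal entry; this gives (a).

  For (b) and (c), a unit vector \<open>w \<in> \<real>\<^sup>r\<close> is sent to the Hermitian matrix \<open>\<Gamma>(w)\<close> of size
  \<open>2\<^sup>r\<close> of a Clifford algebra representation, \<open>\<Gamma>(v)\<Gamma>(w) + \<Gamma>(w)\<Gamma>(v) = 2\<langle>v,w\<rangle> I\<close>. Hence
  \<open>\<Gamma>(w)\<^sup>2 = I\<close> and \<open>Tr(\<Gamma>(v)\<Gamma>(w)) = 2\<^sup>r\<langle>v,w\<rangle>\<close>, and the weight \<open>K = 2^(-r/2) I\<close> (with
  \<open>A\<^sub>k = K\<Gamma>(w\<^sub>k)\<close>) normalises the traces. Conversely \<open>Tr(M\<^sub>i M\<^sub>j\<^sup>*)\<close> is the Frobenius inner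
  product, so such a Gram matrix is positive semidefinite, and the conditions on the \<open>A\<^sub>i\<close>, resp.
  on \<open>X\<^sub>i\<close>, \<open>Y\<^sub>j\<close> and \<open>K\<close>, make its diagonal equal to \<open>1\<close>.
\<close>

lemma smult_mult_smult_mat:
  fixes A B :: "'a::comm_semiring_0 mat"
  assumes "A \<in> carrier_mat nr k" and "B \<in> carrier_mat k nc"
  shows "(a \<cdot>\<^sub>m A) * (b \<cdot>\<^sub>m B) = (a * b) \<cdot>\<^sub>m (A * B)"
  using assms by (intro eq_matI) (auto simp: scalar_prod_def sum_distrib_left mult_ac)

lemma ctrans_smult: "ctrans (c \<cdot>\<^sub>m A) = cnj c \<cdot>\<^sub>m ctrans A"
  unfolding ctrans_def by (rule eq_matI) auto

lemma ctrans_mult: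
  assumes "A \<in> carrier_mat nr k" and "B \<in> carrier_mat k nc"
  shows "ctrans (A * B) = ctrans B * ctrans A"
  using assms unfolding ctrans_def
  by (intro eq_matI) (auto simp: scalar_prod_def mult.commute)

lemma hermitian_ctrans: "hermitian A \<Longrightarrow> ctrans A = A"
  unfolding hermitian_def by simp

lemma hermitian_smult_real: "hermitian A \<Longrightarrow> hermitian (complex_of_real c \<cdot>\<^sub>m A)"
  unfolding hermitian_def by (auto simp: ctrans_smult)

lemma mtrace_add:
  assumes "A \<in> carrier_mat d d" and "B \<in> carrier_mat d d"
  shows "mtrace (A + B) = mtrace A + mtrace B"
  using assms unfolding mtrace_def by (simp add: sum.distrib)

lemma mtrace_smult: "A \<in> carrier_mat d d \<Longrightarrow> mtrace (c \<cdot>\<^sub>m A) = c * mtrace A"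
  unfolding mtrace_def by (simp add: sum_distrib_left)

lemma mtrace_one_mat: "mtrace (1\<^sub>m d :: 'a::comm_ring_1 mat) = of_nat d"
  unfolding mtrace_def by simp

lemma mtrace_mult_comm:
  fixes A B :: "'a::comm_ring_1 mat"
  assumes "A \<in> carrier_mat d d" and "B \<in> carrier_mat d d"
  shows "mtrace (A * B) = mtrace (B * A)"
proof -
  have "mtrace (A * B) = (\<Sum>i<d. \<Sum>k<d. A $$ (i, k) * B $$ (k, i))"
    using assms unfolding mtrace_def by (simp add: scalar_prod_def atLeast0LessThan)
  also have "\<dots> = (\<Sum>k<d. \<Sum>i<d. B $$ (k, i) * A $$ (i, k))"
    by (subst sum.swap) (simp add: mult.commute)
  also have "\<dots> = mtrace (B * A)"
    using assms unfolding mtrace_def by (simp add: scalar_prod_def atLeast0LessThan)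
  finally show ?thesis .
qed

lemma mtrace_mult_ctrans:
  assumes "A \<in> carrier_mat d d" and "B \<in> carrier_mat d d"
  shows "mtrace (A * ctrans B) = (\<Sum>pq \<in> {..<d} \<times> {..<d}. A $$ pq * cnj (B $$ pq))"
  using assms unfolding mtrace_def ctrans_def
  by (simp add: scalar_prod_def atLeast0LessThan sum.cartesian_product)

definition anticomm :: "'a::semiring_0 mat \<Rightarrow> 'a mat \<Rightarrow> 'a mat" where
  "anticomm A B = A * B + B * A"

lemma four_block_mult_scalar_blocks:
  fixes C D :: "'a::comm_ring_1 mat"
  assumes C: "C \<in> carrier_mat k k" and D: "D \<in> carrier_mat k k"
  shows "four_block_mat C (a \<cdot>\<^sub>m 1\<^sub>m k) (a \<cdot>\<^sub>m 1\<^sub>m k) (- C)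
       * four_block_mat D (b \<cdot>\<^sub>m 1\<^sub>m k) (b \<cdot>\<^sub>m 1\<^sub>m k) (- D)
     = four_block_mat (C * D + (a * b) \<cdot>\<^sub>m 1\<^sub>m k) (b \<cdot>\<^sub>m C - a \<cdot>\<^sub>m D)
         (a \<cdot>\<^sub>m D - b \<cdot>\<^sub>m C) ((a * b) \<cdot>\<^sub>m 1\<^sub>m k + C * D)"
  using C D
  by (subst mult_four_block_mat[of _ k k _ k _ k _ _ k _ k])
    (auto intro!: cong_four_block_mat simp: mult_smult_distrib mult_smult_assoc_mat
      minus_add_uminus_mat)

lemma anticomm_four_block_mat:
  fixes C D :: "'a::comm_ring_1 mat"
  assumes C: "C \<in> carrier_mat k k" and D: "D \<in> carrier_mat k k"
    and CD: "anticomm C D = s \<cdot>\<^sub>m 1\<^sub>m k"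
  shows "anticomm (four_block_mat C (a \<cdot>\<^sub>m 1\<^sub>m k) (a \<cdot>\<^sub>m 1\<^sub>m k) (- C))
           (four_block_mat D (b \<cdot>\<^sub>m 1\<^sub>m k) (b \<cdot>\<^sub>m 1\<^sub>m k) (- D))
       = (s + 2 * a * b) \<cdot>\<^sub>m 1\<^sub>m (k + k)"
proof -
  have entry: "row C i \<bullet> col D j + row D i \<bullet> col C j = (if i = j then s else 0)"
    if "i < k" "j < k" for i j
    using arg_cong[OF CD, of "\<lambda>M. M $$ (i, j)"] that C D by (simp add: anticomm_def)
  have one: "(s + 2 * a * b) \<cdot>\<^sub>m 1\<^sub>m (k + k)
      = four_block_mat ((s + 2 * a * b) \<cdot>\<^sub>m 1\<^sub>m k) (0\<^sub>m k k) (0\<^sub>m k k) ((s + 2 * a * b) \<cdot>\<^sub>m 1\<^sub>m k)"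
    by (rule eq_matI) auto
  show ?thesis
    unfolding anticomm_def four_block_mult_scalar_blocks[OF C D]
      four_block_mult_scalar_blocks[OF D C] one
    using C D
    by (subst add_four_block_mat[of _ k k])
      (auto intro!: cong_four_block_mat eq_matI simp: entry algebra_simps)
qed

lemma mtrace_mult_if_anticomm:
  fixes X Y :: "'a::field_char_0 mat"
  assumes X: "X \<in> carrier_mat d d" and Y: "Y \<in> carrier_mat d d"
    and XY: "anticomm X Y = s \<cdot>\<^sub>m 1\<^sub>m d"
  shows "mtrace (X * Y) = s * of_nat d / 2"
proof -
  have "s * of_nat d = mtrace (X * Y + Y * X)"
    using XY by (simp add: anticomm_def mtrace_smult[of "1\<^sub>m d" d] mtrace_one_mat)
  also have "\<dots> = 2 * mtrace (X * Y)"
    using X Y by (simp add: mtrace_add[of _ d] mtrace_mult_comm[OF Y X])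
  finally show ?thesis by simp
qed

lemma mult_self_if_anticomm:
  fixes X :: "'a::field_char_0 mat"
  assumes X: "X \<in> carrier_mat d d" and XX: "anticomm X X = 2 \<cdot>\<^sub>m 1\<^sub>m d"
  shows "X * X = 1\<^sub>m d"
proof (rule eq_matI)
  fix i j assume "i < dim_row (1\<^sub>m d :: 'a mat)" "j < dim_col (1\<^sub>m d :: 'a mat)"
  then have "2 * (X * X) $$ (i, j) = 2 * 1\<^sub>m d $$ (i, j)"
    using arg_cong[OF XX, of "\<lambda>M. M $$ (i, j)"] X by (simp add: anticomm_def)
  then show "(X * X) $$ (i, j) = 1\<^sub>m d $$ (i, j)" by simp
qed (use X in auto)

text \<open>A real-linear Hermitian representation of the Clifford algebra of \<open>\<real>^(p+1)\<close> on
  \<open>\<complex>^(2^p)\<close>: only the coordinates \<open>x 0, \<dots>, x p\<close> are used.\<close>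
fun clifford_mat :: "nat \<Rightarrow> (nat \<Rightarrow> real) \<Rightarrow> complex mat" where
  "clifford_mat 0 x = mat 1 1 (\<lambda>_. complex_of_real (x 0))"
| "clifford_mat (Suc p) x =
     four_block_mat (clifford_mat p x) (complex_of_real (x (Suc p)) \<cdot>\<^sub>m 1\<^sub>m (2 ^ p))
       (complex_of_real (x (Suc p)) \<cdot>\<^sub>m 1\<^sub>m (2 ^ p)) (- clifford_mat p x)"

lemma clifford_mat_carrier [simp]: "clifford_mat p x \<in> carrier_mat (2 ^ p) (2 ^ p)"
  by (induction p) (auto simp: mult_2)

lemma dim_clifford_mat [simp]:
  "dim_row (clifford_mat p x) = 2 ^ p" "dim_col (clifford_mat p x) = 2 ^ p"
  using carrier_matD[OF clifford_mat_carrier[of p x]] by auto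

lemma clifford_mat_hermitian: "hermitian (clifford_mat p x)"
proof -
  have "cnj (clifford_mat p x $$ (i, j)) = clifford_mat p x $$ (j, i)"
    if "i < 2 ^ p" "j < 2 ^ p" for i j
    using that
  proof (induction p arbitrary: i j)
    case (Suc p)
    then show ?case by (auto simp: mult_2)
  qed simp
  then show ?thesis unfolding hermitian_def ctrans_def by (auto intro!: eq_matI)
qed

lemma anticomm_clifford_mat:
  "anticomm (clifford_mat p x) (clifford_mat p y)
     = complex_of_real (2 * (\<Sum>k\<le>p. x k * y k)) \<cdot>\<^sub>m 1\<^sub>m (2 ^ p)"
proof (induction p)
  case 0
  show ?case by (rule eq_matI) (auto simp: anticomm_def scalar_prod_def)
next
  case (Suc p)
  have "(2::nat) ^ Suc p = 2 ^ p + 2 ^ p" by simp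
  moreover have "complex_of_real (2 * (\<Sum>k\<le>Suc p. x k * y k))
      = complex_of_real (2 * (\<Sum>k\<le>p. x k * y k)) + 2 * complex_of_real (x (Suc p)) * complex_of_real (y (Suc p))"
    by (simp add: distrib_left)
  ultimately show ?case
    using anticomm_four_block_mat[OF clifford_mat_carrier clifford_mat_carrier Suc.IH]
    by (simp only: clifford_mat.simps)
qed

text \<open>The padding zero makes \<open>clifford_mat r\<close>, which reads \<open>r + 1\<close> coordinates, accept
  vectors of \<open>\<real>\<^sup>r\<close>.\<close>
definition clifford_of_vec :: "nat \<Rightarrow> real vec \<Rightarrow> complex mat" where
  "clifford_of_vec r v = clifford_mat r (\<lambda>t. if t < r then v $ t else 0)"

lemma clifford_of_vec_carrier [simp]: "clifford_of_vec r v \<in> carrier_mat (2 ^ r) (2 ^ r)"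
  unfolding clifford_of_vec_def by simp

lemma clifford_of_vec_hermitian: "hermitian (clifford_of_vec r v)"
  unfolding clifford_of_vec_def by (rule clifford_mat_hermitian)

lemma anticomm_clifford_of_vec:
  assumes "v \<in> carrier_vec r" and "w \<in> carrier_vec r"
  shows "anticomm (clifford_of_vec r v) (clifford_of_vec r w)
     = complex_of_real (2 * (v \<bullet> w)) \<cdot>\<^sub>m 1\<^sub>m (2 ^ r)"
proof -
  have "(\<Sum>t\<le>r. (if t < r then v $ t else 0) * (if t < r then w $ t else 0)) = (\<Sum>t<r. v $ t * w $ t)"
    by (simp add: lessThan_Suc_atMost[symmetric])
  also have "\<dots> = v \<bullet> w"
    using assms by (simp add: scalar_prod_def atLeast0LessThan mult.commute)
  finally show ?thesis
    unfolding clifford_of_vec_def anticomm_clifford_mat by simp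
qed

lemma clifford_of_vec_square:
  assumes "v \<in> carrier_vec r" and "v \<bullet> v = 1"
  shows "clifford_of_vec r v * clifford_of_vec r v = 1\<^sub>m (2 ^ r)"
  using anticomm_clifford_of_vec[OF assms(1,1)] assms(2)
  by (intro mult_self_if_anticomm[OF clifford_of_vec_carrier]) simp

lemma mtrace_clifford_of_vec:
  assumes "v \<in> carrier_vec r" and "w \<in> carrier_vec r"
  shows "mtrace (clifford_of_vec r v * clifford_of_vec r w) = 2 ^ r * complex_of_real (v \<bullet> w)"
  using mtrace_mult_if_anticomm[OF clifford_of_vec_carrier clifford_of_vec_carrier
      anticomm_clifford_of_vec[OF assms]]
  by simp

lemma sum_bilinear_factor:
  fixes v :: "nat \<Rightarrow> 'a::comm_ring_1" and f g :: "nat \<Rightarrow> 'b \<Rightarrow> 'a"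
  shows "(\<Sum>i<N. v i * (\<Sum>j<N. (\<Sum>t\<in>T. f i t * g j t) * v j))
       = (\<Sum>t\<in>T. (\<Sum>i<N. v i * f i t) * (\<Sum>j<N. v j * g j t))"
proof -
  have "(\<Sum>i<N. v i * (\<Sum>j<N. (\<Sum>t\<in>T. f i t * g j t) * v j))
      = (\<Sum>i<N. \<Sum>j<N. \<Sum>t\<in>T. (v i * f i t) * (v j * g j t))"
    by (simp add: sum_distrib_left sum_distrib_right mult_ac)
  also have "\<dots> = (\<Sum>i<N. \<Sum>t\<in>T. \<Sum>j<N. (v i * f i t) * (v j * g j t))"
    by (simp add: sum.swap[of _ T])
  also have "\<dots> = (\<Sum>t\<in>T. \<Sum>i<N. \<Sum>j<N. (v i * f i t) * (v j * g j t))"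
    by (rule sum.swap)
  also have "\<dots> = (\<Sum>t\<in>T. (\<Sum>i<N. v i * f i t) * (\<Sum>j<N. v j * g j t))"
    by (simp add: sum_product)
  finally show ?thesis .
qed

lemma scalar_prod_mult_mat_vec_sum:
  assumes "v \<in> carrier_vec N" and "E \<in> carrier_mat N N"
  shows "v \<bullet> (E *\<^sub>v v) = (\<Sum>i<N. v $ i * (\<Sum>j<N. E $$ (i, j) * v $ j))"
  using assms by (simp add: scalar_prod_def atLeast0LessThan row_def)

text \<open>\<open>v\<^sup>T E v = \<Sum>\<^sub>t \<bar>\<Sum>\<^sub>i v\<^sub>i f\<^sub>i(t)\<bar>\<^sup>2\<close>.\<close>
lemma psd_real_if_inner_products:
  assumes E: "E \<in> carrier_mat N N" and sym: "transpose_mat E = E"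
    and entries: "\<And>i j. i < N \<Longrightarrow> j < N \<Longrightarrow>
       complex_of_real (E $$ (i, j)) = (\<Sum>t\<in>T. f i t * cnj (f j t))"
  shows "psd_real N E"
  unfolding psd_real_def
proof (intro conjI ballI E sym)
  fix v :: "real vec" assume v: "v \<in> carrier_vec N"
  let ?z = "\<lambda>t. \<Sum>i<N. complex_of_real (v $ i) * f i t"
  have "complex_of_real (v \<bullet> (E *\<^sub>v v))
      = (\<Sum>i<N. complex_of_real (v $ i) * (\<Sum>j<N. complex_of_real (E $$ (i, j)) * complex_of_real (v $ j)))"
    by (simp add: scalar_prod_mult_mat_vec_sum[OF v E])
  also have "\<dots> = (\<Sum>i<N. complex_of_real (v $ i) *
      (\<Sum>j<N. (\<Sum>t\<in>T. f i t * cnj (f j t)) * complex_of_real (v $ j)))"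
    by (intro sum.cong refl) (simp add: entries)
  also have "\<dots> = (\<Sum>t\<in>T. ?z t * (\<Sum>j<N. complex_of_real (v $ j) * cnj (f j t)))"
    by (rule sum_bilinear_factor)
  also have "\<dots> = (\<Sum>t\<in>T. ?z t * cnj (?z t))"
    by simp
  also have "\<dots> = complex_of_real (\<Sum>t\<in>T. (cmod (?z t))\<^sup>2)"
    by (simp only: of_real_sum complex_norm_square)
  finally have "v \<bullet> (E *\<^sub>v v) = (\<Sum>t\<in>T. (cmod (?z t))\<^sup>2)"
    by (simp only: of_real_eq_iff)
  then show "0 \<le> v \<bullet> (E *\<^sub>v v)"
    by (simp add: sum_nonneg)
qed

lemma gram_vec_psd:
  assumes "\<And>k. k < N \<Longrightarrow> w k \<in> carrier_vec r"
  shows "psd_real N (gram_vec N w)"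
proof (rule psd_real_if_inner_products)
  show "transpose_mat (gram_vec N w) = gram_vec N w"
    using assms unfolding gram_vec_def by (auto intro!: eq_matI comm_scalar_prod)
  show "complex_of_real (gram_vec N w $$ (i, j))
      = (\<Sum>t<r. complex_of_real (w i $ t) * cnj (complex_of_real (w j $ t)))"
    if "i < N" "j < N" for i j
    using that assms[of j] unfolding gram_vec_def by (simp add: scalar_prod_def atLeast0LessThan)
qed (simp add: gram_vec_def)

lemma gram_mat_psd:
  assumes "\<And>k. k < N \<Longrightarrow> M k \<in> carrier_mat d d"
    and "complex_of_mat E = gram_mat N M"
    and "E \<in> carrier_mat N N" and "transpose_mat E = E"
  shows "psd_real N E"
proof (rule psd_real_if_inner_products[OF assms(3,4)])
  fix i j assume "i < N" "j < N"
  then have "complex_of_real (E $$ (i, j)) = mtrace (M i * ctrans (M j))"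
    using arg_cong[OF assms(2), of "\<lambda>A. A $$ (i, j)"] assms(3)
    unfolding complex_of_mat_def gram_mat_def by simp
  then show "complex_of_real (E $$ (i, j))
      = (\<Sum>pq\<in>{..<d} \<times> {..<d}. M i $$ pq * cnj (M j $$ pq))"
    using mtrace_mult_ctrans assms(1) \<open>i < N\<close> \<open>j < N\<close> by simp
qed

definition quad_form :: "nat \<Rightarrow> (nat \<Rightarrow> nat \<Rightarrow> real) \<Rightarrow> (nat \<Rightarrow> real) \<Rightarrow> real" where
  "quad_form N E v = (\<Sum>i<N. v i * (\<Sum>j<N. E i j * v j))"

definition psd_form :: "nat \<Rightarrow> (nat \<Rightarrow> nat \<Rightarrow> real) \<Rightarrow> bool" where
  "psd_form N E \<longleftrightarrow> (\<forall>i<N. \<forall>j<N. E i j = E j i) \<and> (\<forall>v. 0 \<le> quad_form N E v)"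

lemma quad_form_Suc:
  "quad_form (Suc N) E v = quad_form N E v + v N * (\<Sum>i<N. E i N * v i)
     + v N * (\<Sum>j<N. E N j * v j) + v N * E N N * v N"
  unfolding quad_form_def
  by (simp add: distrib_left sum.distrib sum_distrib_left sum_distrib_right mult_ac)

lemma quad_form_cong: "(\<And>i. i < N \<Longrightarrow> v i = v' i) \<Longrightarrow> quad_form N E v = quad_form N E v'"
  unfolding quad_form_def by (intro sum.cong refl) simp

lemma quad_form_subtract_rank_one:
  "quad_form N (\<lambda>i j. E i j - c i * c j / a) v
     = quad_form N E v - (\<Sum>i<N. c i * v i) * (\<Sum>i<N. c i * v i) / a"
proof -
  have row: "(\<Sum>j<N. (E i j - c i * c j / a) * v j) = (\<Sum>j<N. E i j * v j) - c i * (\<Sum>j<N. c j * v j) / a"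
    for i
  proof -
    have "(\<Sum>j<N. (E i j - c i * c j / a) * v j) = (\<Sum>j<N. E i j * v j - (c i / a) * (c j * v j))"
      by (rule sum.cong) (simp_all add: algebra_simps)
    then show ?thesis by (simp add: sum_subtractf sum_distrib_left sum_divide_distrib)
  qed
  show ?thesis
    unfolding quad_form_def row
    by (simp add: right_diff_distrib sum_subtractf sum_distrib_left sum_distrib_right
        sum_divide_distrib mult_ac)
qed

lemma sum_delta_mult_left:
  "i < (N::nat) \<Longrightarrow> (\<Sum>t<N. (if t = i then x else 0) * f t) = x * (f i :: 'a::semiring_0)"
proof -
  assume "i < N"
  have "(\<Sum>t<N. (if t = i then x else 0) * f t) = (\<Sum>t<N. if t = i then x * f t else 0)"
    by (rule sum.cong) auto
  also have "\<dots> = x * f i" using \<open>i < N\<close> by (subst sum.delta) auto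
  finally show ?thesis .
qed

lemma sum_delta_mult_right:
  "i < (N::nat) \<Longrightarrow> (\<Sum>t<N. f t * (if t = i then x else 0)) = f i * (x :: 'a::semiring_0)"
proof -
  assume "i < N"
  have "(\<Sum>t<N. f t * (if t = i then x else 0)) = (\<Sum>t<N. if t = i then f t * x else 0)"
    by (rule sum.cong) auto
  also have "\<dots> = f i * x" using \<open>i < N\<close> by (subst sum.delta) auto
  finally show ?thesis .
qed

lemma quad_form_two_point:
  assumes "i < N"
  shows "quad_form (Suc N) E (\<lambda>t. if t = i then x else if t = N then y else 0)
     = x * E i i * x + y * E i N * x + y * E N i * x + y * E N N * y"
proof -
  let ?v = "\<lambda>t. if t = i then x else if t = N then y else 0"
  have restrict: "(\<Sum>t<N. f t * ?v t) = f i * x" for f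
  proof -
    have "(\<Sum>t<N. f t * ?v t) = (\<Sum>t<N. f t * (if t = i then x else 0))"
      by (rule sum.cong) auto
    then show ?thesis using sum_delta_mult_right[OF assms] by simp
  qed
  have "quad_form N E ?v = quad_form N E (\<lambda>t. if t = i then x else 0)"
    by (rule quad_form_cong) simp
  also have "\<dots> = x * E i i * x"
    using assms unfolding quad_form_def by (simp add: sum_delta_mult_left sum_delta_mult_right)
  finally show ?thesis
    using assms unfolding quad_form_Suc restrict by simp
qed

lemma psd_form_last_diag_nonneg:
  assumes "psd_form (Suc N) E"
  shows "0 \<le> E N N"
proof -
  have "quad_form (Suc N) E (\<lambda>t. if t = N then 1 else 0) = E N N"
    using quad_form_cong[of N "\<lambda>t. if t = N then 1 else 0" "\<lambda>_. 0" E]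
    by (simp add: quad_form_Suc quad_form_def)
  then show ?thesis using assms unfolding psd_form_def by metis
qed

lemma psd_form_last_column_zero:
  assumes psd: "psd_form (Suc N) E" and zero: "E N N = 0" and i: "i < N"
  shows "E i N = 0"
proof (rule ccontr)
  assume ne: "E i N \<noteq> 0"
  define y where "y = - (E i i + 1) / (2 * E i N)"
  have "0 \<le> quad_form (Suc N) E (\<lambda>t. if t = i then 1 else if t = N then y else 0)"
    using psd unfolding psd_form_def by blast
  also have "\<dots> = - 1"
    using psd i ne zero unfolding quad_form_two_point[OF i] psd_form_def y_def
    by (simp add: field_simps)
  finally show False by simp
qed

lemma psd_form_schur_complement:
  assumes psd: "psd_form (Suc N) E"
  shows "psd_form N (\<lambda>i j. E i j - E i N * E j N / E N N)"
  unfolding psd_form_def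
proof (intro conjI allI impI)
  show "E i j - E i N * E j N / E N N = E j i - E j N * E i N / E N N"
    if "i < N" "j < N" for i j
    using psd that unfolding psd_form_def by (simp add: mult.commute)
  fix v
  define S where "S = (\<Sum>i<N. E i N * v i)"
  define v' where "v' = v(N := - S / E N N)"
  have "quad_form N E v' = quad_form N E v"
    by (rule quad_form_cong) (simp add: v'_def)
  moreover have "(\<Sum>i<N. E i N * v' i) = S" "(\<Sum>j<N. E N j * v' j) = S"
    using psd unfolding S_def v'_def psd_form_def by (auto intro!: sum.cong)
  ultimately have "quad_form (Suc N) E v' = quad_form N E v - S * S / E N N"
    unfolding quad_form_Suc by (cases "E N N = 0") (simp_all add: v'_def field_simps)
  also have "\<dots> = quad_form N (\<lambda>i j. E i j - E i N * E j N / E N N) v"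
    unfolding S_def by (rule quad_form_subtract_rank_one[symmetric])
  finally show "0 \<le> quad_form N (\<lambda>i j. E i j - E i N * E j N / E N N) v"
    using psd unfolding psd_form_def by metis
qed

text \<open>Induction on \<open>N\<close>, splitting off the Schur complement of the last diagonal entry
  \<open>\<alpha>\<close>. The new coordinate is \<open>E i N / \<surd>\<alpha>\<close>; when \<open>\<alpha> = 0\<close> the last column vanishes and
  division by zero in HOL gives the right value \<open>0\<close>.\<close>
lemma psd_form_gram_factorization:
  "psd_form N E \<Longrightarrow> \<exists>(r::nat) u. \<forall>i<N. \<forall>j<N. E i j = (\<Sum>k<r. u i k * u j k)"
proof (induction N arbitrary: E)
  case 0
  then show ?case by auto
next
  case (Suc N)
  define \<alpha> where "\<alpha> = E N N"
  define F where "F i j = E i j - E i N * E j N / \<alpha>" for i j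
  obtain r :: nat and u where u: "\<forall>i<N. \<forall>j<N. F i j = (\<Sum>k<r. u i k * u j k)"
    using Suc.IH[of F] psd_form_schur_complement[OF Suc.prems] unfolding F_def \<alpha>_def by blast
  define u' where "u' i k = (if k < r then (if i < N then u i k else 0)
      else if i < N then E i N / sqrt \<alpha> else sqrt \<alpha>)" for i k
  have sym: "E i j = E j i" if "i < Suc N" "j < Suc N" for i j
    using Suc.prems that unfolding psd_form_def by blast
  have sqrt_sq: "sqrt \<alpha> * sqrt \<alpha> = \<alpha>"
    using psd_form_last_diag_nonneg[OF Suc.prems] unfolding \<alpha>_def by simp
  have column: "E i N = 0" if "\<alpha> = 0" "i < N" for i
    using psd_form_last_column_zero[OF Suc.prems] that unfolding \<alpha>_def by blast
  have head: "(\<Sum>k<r. u' i k * u' j k) = (if i < N \<and> j < N then F i j else 0)" for i j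
    using u by (cases "i < N"; cases "j < N") (simp_all add: u'_def)
  have last: "u' i r * u' j r = E i j - (if i < N \<and> j < N then F i j else 0)"
    if "i < Suc N" "j < Suc N" for i j
    using that sym[OF that] sqrt_sq column[of i] column[of j]
    by (cases "\<alpha> = 0") (auto simp: u'_def F_def \<alpha>_def less_Suc_eq)
  have "E i j = (\<Sum>k<Suc r. u' i k * u' j k)" if "i < Suc N" "j < Suc N" for i j
    using head[of i j] last[OF that] by simp
  then show ?case by blast
qed

lemma psd_real_psd_form:
  assumes "psd_real N E"
  shows "psd_form N (\<lambda>i j. E $$ (i, j))"
proof -
  have E: "E \<in> carrier_mat N N" and sym: "transpose_mat E = E"
    and nonneg: "\<forall>v\<in>carrier_vec N. 0 \<le> v \<bullet> (E *\<^sub>v v)"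
    using assms unfolding psd_real_def by auto
  have "E $$ (i, j) = E $$ (j, i)" if "i < N" "j < N" for i j
    using arg_cong[OF sym, of "\<lambda>A. A $$ (j, i)"] that E by simp
  moreover have "quad_form N (\<lambda>i j. E $$ (i, j)) v = vec N v \<bullet> (E *\<^sub>v vec N v)" for v
    unfolding quad_form_def scalar_prod_mult_mat_vec_sum[OF vec_carrier E]
    by (auto intro!: sum.cong)
  ultimately show ?thesis
    unfolding psd_form_def using nonneg by simp
qed

lemma psd_real_gram_vec:
  assumes "psd_real N E"
  obtains r w where "\<And>k. w k \<in> carrier_vec r" and "E = gram_vec N w"
proof -
  obtain r :: nat and u where u: "\<forall>i<N. \<forall>j<N. E $$ (i, j) = (\<Sum>k<r. u i k * u j k)"
    using psd_form_gram_factorization[OF psd_real_psd_form[OF assms]] by blast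
  have "E = gram_vec N (\<lambda>i. vec r (u i))"
    using assms u unfolding psd_real_def gram_vec_def
    by (auto intro!: eq_matI simp: scalar_prod_def atLeast0LessThan)
  then show ?thesis using that[of "\<lambda>i. vec r (u i)" r] by simp
qed

lemma elliptope_iff_gram_unit_vectors:
  "E \<in> elliptope N \<longleftrightarrow>
     (\<exists>(r::nat) w. (\<forall>k<N. w k \<in> carrier_vec r \<and> w k \<bullet> w k = 1) \<and> E = gram_vec N w)"
proof
  assume E: "E \<in> elliptope N"
  then obtain r w where w: "\<And>k. w k \<in> carrier_vec r" and Ew: "E = gram_vec N w"
    using psd_real_gram_vec unfolding elliptope_def by blast
  moreover have "w k \<bullet> w k = 1" if "k < N" for k
    using E that unfolding elliptope_def Ew gram_vec_def by simp
  ultimately show "\<exists>(r::nat) w. (\<forall>k<N. w k \<in> carrier_vec r \<and> w k \<bullet> w k = 1) \<and> E = gram_vec N w"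
    by blast
next
  assume "\<exists>(r::nat) w. (\<forall>k<N. w k \<in> carrier_vec r \<and> w k \<bullet> w k = 1) \<and> E = gram_vec N w"
  then obtain r w where w: "\<forall>k<N. w k \<in> carrier_vec r \<and> w k \<bullet> w k = 1" and Ew: "E = gram_vec N w"
    by blast
  then show "E \<in> elliptope N"
    using gram_vec_psd[of N w r] unfolding elliptope_def by (simp add: gram_vec_def)
qed

lemma gram_mat_in_elliptope:
  assumes E: "E \<in> carrier_mat N N" and sym: "transpose_mat E = E"
    and M: "\<And>k. k < N \<Longrightarrow> M k \<in> carrier_mat d d"
    and unit: "\<And>k. k < N \<Longrightarrow> mtrace (M k * ctrans (M k)) = 1"
    and gram: "complex_of_mat E = gram_mat N M"
  shows "E \<in> elliptope N"
proof -
  have "complex_of_real (E $$ (k, k)) = mtrace (M k * ctrans (M k))" if "k < N" for k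
    using arg_cong[OF gram, of "\<lambda>A. A $$ (k, k)"] E that
    unfolding complex_of_mat_def gram_mat_def by simp
  then show ?thesis
    using unit gram_mat_psd[OF M gram E sym] unfolding elliptope_def by simp
qed

lemma mtrace_mult_ctrans_square_scalar:
  assumes "A \<in> carrier_mat d d" and "hermitian A"
    and "A * A = (1 / of_nat d) \<cdot>\<^sub>m 1\<^sub>m d" and "d \<ge> 1"
  shows "mtrace (A * ctrans A) = 1"
  using assms by (simp add: hermitian_ctrans mtrace_smult[of _ d] mtrace_one_mat)

lemma mtrace_weighted_involution:
  assumes K: "K \<in> carrier_mat d d" "hermitian K"
    and X: "X \<in> carrier_mat d d" "hermitian X" "X * X = 1\<^sub>m d"
  shows "mtrace (K * X * ctrans (K * X)) = mtrace (K * K)"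
    and "mtrace (X * K * ctrans (X * K)) = mtrace (K * K)"
proof -
  have KX: "ctrans (K * X) = X * K" and XK: "ctrans (X * K) = K * X"
    using ctrans_mult[OF K(1) X(1)] ctrans_mult[OF X(1) K(1)] K X by (simp_all add: hermitian_ctrans)
  have "K * X * (X * K) = K * (X * X * K)"
    using assoc_mult_mat[OF K(1) X(1), of "X * K" d] assoc_mult_mat[OF X(1) X(1) K(1)] K X
    by simp
  then show first: "mtrace (K * X * ctrans (K * X)) = mtrace (K * K)"
    using K X by (simp add: KX)
  show "mtrace (X * K * ctrans (X * K)) = mtrace (K * K)"
    using mtrace_mult_comm[of "X * K" d "K * X"] first K X by (simp add: KX XK)
qed

lemma smult_mat_mult_vec:
  "A \<in> carrier_mat nr nc \<Longrightarrow> v \<in> carrier_vec nc \<Longrightarrow> (c \<cdot>\<^sub>m A) *\<^sub>v v = c \<cdot>\<^sub>v (A *\<^sub>v v)"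
  by (rule eq_vecI) (auto simp: scalar_prod_def sum_distrib_left mult_ac)

lemma pos_def_smult_one_mat:
  assumes "0 < c"
  shows "pos_def (complex_of_real c \<cdot>\<^sub>m 1\<^sub>m d)"
  unfolding pos_def_def
proof (intro conjI ballI impI)
  show "hermitian (complex_of_real c \<cdot>\<^sub>m 1\<^sub>m d)"
    unfolding hermitian_def ctrans_def by (auto intro!: eq_matI)
  fix v :: "complex vec"
  assume "v \<in> carrier_vec (dim_row (complex_of_real c \<cdot>\<^sub>m 1\<^sub>m d))"
    and "v \<noteq> 0\<^sub>v (dim_row (complex_of_real c \<cdot>\<^sub>m 1\<^sub>m d))"
  then have v: "v \<in> carrier_vec d" and nz: "v \<noteq> 0\<^sub>v d" by simp_all
  obtain i where i: "i < d" "v $ i \<noteq> 0"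
  proof (rule ccontr)
    assume "\<not> thesis"
    then have "v = 0\<^sub>v d" using v that by (intro eq_vecI) auto
    with nz show False by simp
  qed
  have "(complex_of_real c \<cdot>\<^sub>m 1\<^sub>m d) *\<^sub>v v = complex_of_real c \<cdot>\<^sub>v v"
    using smult_mat_mult_vec[of "1\<^sub>m d" d d v] v by simp
  then have "conjugate v \<bullet> ((complex_of_real c \<cdot>\<^sub>m 1\<^sub>m d) *\<^sub>v v)
     = complex_of_real (c * (\<Sum>i<d. (cmod (v $ i))\<^sup>2))"
    using v by (simp add: scalar_prod_def atLeast0LessThan sum_distrib_left
        complex_norm_square[symmetric] mult_ac)
  moreover have "0 < (\<Sum>i<d. (cmod (v $ i))\<^sup>2)"
    using i by (intro sum_pos2[of _ i]) auto
  ultimately show "0 < Re (conjugate v \<bullet> ((complex_of_real c \<cdot>\<^sub>m 1\<^sub>m d) *\<^sub>v v))"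
    using assms by simp
qed

lemma unit_vectors_clifford_witnesses:
  assumes w: "\<forall>k<N. w k \<in> carrier_vec r \<and> w k \<bullet> w k = 1"
  obtains d :: nat and \<Gamma> K where "d \<ge> 1"
    and "\<And>k. k < N \<Longrightarrow> \<Gamma> k \<in> carrier_mat d d \<and> hermitian (\<Gamma> k) \<and> \<Gamma> k * \<Gamma> k = 1\<^sub>m d"
    and "\<And>k. k < N \<Longrightarrow> K * \<Gamma> k \<in> carrier_mat d d \<and> hermitian (K * \<Gamma> k)
           \<and> (K * \<Gamma> k) * (K * \<Gamma> k) = (1 / of_nat d) \<cdot>\<^sub>m 1\<^sub>m d"
    and "K \<in> carrier_mat d d" "hermitian K" "pos_def K" "mtrace (K * K) = 1"
    and "\<And>k. \<Gamma> k * K = K * \<Gamma> k"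
    and "complex_of_mat (gram_vec N w) = gram_mat N (\<lambda>k. K * \<Gamma> k)"
proof -
  define d :: nat where "d = 2 ^ r"
  define c where "c = complex_of_real (1 / sqrt (2 ^ r))"
  define \<Gamma> where "\<Gamma> k = clifford_of_vec r (w k)" for k
  define K where "K = c \<cdot>\<^sub>m 1\<^sub>m d"
  have \<Gamma>: "\<Gamma> k \<in> carrier_mat d d" "hermitian (\<Gamma> k)" for k
    unfolding \<Gamma>_def d_def by (simp_all add: clifford_of_vec_hermitian)
  have "(1 / sqrt (2 ^ r)) * (1 / sqrt (2 ^ r)) = (1 / 2 ^ r :: real)"
    by simp
  then have cc: "c * c = 1 / of_nat d"
    unfolding c_def d_def by (metis of_real_mult of_real_divide of_real_1 of_real_power
        of_real_numeral of_nat_power of_nat_numeral)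
  have c_real: "cnj c = c"
    unfolding c_def by simp
  have c_herm: "hermitian (c \<cdot>\<^sub>m \<Gamma> k)" for k
    unfolding c_def by (rule hermitian_smult_real[OF \<Gamma>(2)])
  have K\<Gamma>: "K * \<Gamma> k = c \<cdot>\<^sub>m \<Gamma> k" "\<Gamma> k * K = c \<cdot>\<^sub>m \<Gamma> k" for k
    unfolding K_def using \<Gamma>(1)[of k]
    by (simp_all add: mult_smult_assoc_mat[of _ d d _ d] mult_smult_distrib[of _ d d _ d])
  have KK: "K * K = (c * c) \<cdot>\<^sub>m 1\<^sub>m d"
    unfolding K_def using smult_mult_smult_mat[of "1\<^sub>m d" d d "1\<^sub>m d" d c c] by simp
  have K: "pos_def K"
    unfolding K_def c_def by (rule pos_def_smult_one_mat) simp
  have square: "\<Gamma> k * \<Gamma> k = 1\<^sub>m d" if "k < N" for k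
    using w that unfolding \<Gamma>_def d_def by (simp add: clifford_of_vec_square)
  have "mtrace ((c \<cdot>\<^sub>m \<Gamma> k) * ctrans (c \<cdot>\<^sub>m \<Gamma> l)) = complex_of_real (w k \<bullet> w l)"
    if "k < N" "l < N" for k l
  proof -
    have "(c \<cdot>\<^sub>m \<Gamma> k) * ctrans (c \<cdot>\<^sub>m \<Gamma> l) = (c * c) \<cdot>\<^sub>m (\<Gamma> k * \<Gamma> l)"
      using \<Gamma> c_real by (simp add: hermitian_ctrans ctrans_smult smult_mult_smult_mat[OF \<Gamma>(1) \<Gamma>(1)])
    moreover have "mtrace (\<Gamma> k * \<Gamma> l) = of_nat d * complex_of_real (w k \<bullet> w l)"
      using w that unfolding \<Gamma>_def d_def by (simp add: mtrace_clifford_of_vec)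
    ultimately show ?thesis
      using \<Gamma>(1)[of k] \<Gamma>(1)[of l] cc d_def by (simp add: mtrace_smult[of _ d])
  qed
  then have "complex_of_mat (gram_vec N w) = gram_mat N (\<lambda>k. K * \<Gamma> k)"
    unfolding complex_of_mat_def gram_vec_def gram_mat_def K\<Gamma> by (auto intro!: eq_matI)
  moreover have "K * \<Gamma> k \<in> carrier_mat d d \<and> hermitian (K * \<Gamma> k)
      \<and> (K * \<Gamma> k) * (K * \<Gamma> k) = (1 / of_nat d) \<cdot>\<^sub>m 1\<^sub>m d" if "k < N" for k
    using \<Gamma>[of k] square[OF that] cc c_herm
    unfolding K\<Gamma> by (simp add: smult_mult_smult_mat[OF \<Gamma>(1) \<Gamma>(1)])
  moreover have "mtrace (K * K) = 1"
    unfolding KK using cc by (simp add: mtrace_smult[of _ d] mtrace_one_mat d_def)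
  ultimately show ?thesis
    using that[of d \<Gamma> K] \<Gamma> square K K\<Gamma> unfolding pos_def_def
    by (auto simp: d_def K_def)
qed

lemma concat_fam_split: "concat_fam n f (\<lambda>j. f (n + j)) = f"
  unfolding concat_fam_def by auto

lemma concat_fam_cases:
  assumes "\<And>i. i < n \<Longrightarrow> P (x i)" and "\<And>j. j < m \<Longrightarrow> P (y j)" and "k < n + m"
  shows "P (concat_fam n x y k)"
  using assms unfolding concat_fam_def by (cases "k < n") auto

lemma ex_concat_fam_iff:
  "(\<exists>w. (\<forall>k<n + m. P (w k)) \<and> Q w)
     \<longleftrightarrow> (\<exists>x y. (\<forall>i<n. P (x i)) \<and> (\<forall>j<m. P (y j)) \<and> Q (concat_fam n x y))"
proof
  assume "\<exists>w. (\<forall>k<n + m. P (w k)) \<and> Q w"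
  then obtain w where "\<forall>k<n + m. P (w k)" "Q w" by blast
  then show "\<exists>x y. (\<forall>i<n. P (x i)) \<and> (\<forall>j<m. P (y j)) \<and> Q (concat_fam n x y)"
    by (intro exI[of _ w] exI[of _ "\<lambda>j. w (n + j)"]) (simp add: concat_fam_split)
next
  assume "\<exists>x y. (\<forall>i<n. P (x i)) \<and> (\<forall>j<m. P (y j)) \<and> Q (concat_fam n x y)"
  then show "\<exists>w. (\<forall>k<n + m. P (w k)) \<and> Q w"
    using concat_fam_cases[of n P _ m] by blast
qed

lemma gram_mat_concat_in_elliptope:
  assumes "E \<in> carrier_mat (n + m) (n + m)" and "transpose_mat E = E"
    and "\<And>i. i < n \<Longrightarrow> x i \<in> carrier_mat d d \<and> mtrace (x i * ctrans (x i)) = 1"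
    and "\<And>j. j < m \<Longrightarrow> y j \<in> carrier_mat d d \<and> mtrace (y j * ctrans (y j)) = 1"
    and "complex_of_mat E = gram_mat (n + m) (concat_fam n x y)"
  shows "E \<in> elliptope (n + m)"
  using concat_fam_cases[where P = "\<lambda>M. M \<in> carrier_mat d d \<and> mtrace (M * ctrans M) = 1"] assms
  by (intro gram_mat_in_elliptope[OF assms(1,2) _ _ assms(5)]) blast+

theorem lemma2p6:
  fixes n m :: nat and E :: "real mat"
  assumes "E \<in> carrier_mat (n+m) (n+m)" and "transpose_mat E = E"
  shows "(E \<in> elliptope (n+m)
      \<longleftrightarrow> (\<exists>r a b. (\<forall>i<n. a i \<in> carrier_vec r \<and> a i \<bullet> a i = 1)
               \<and> (\<forall>j<m. b j \<in> carrier_vec r \<and> b j \<bullet> b j = 1)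
               \<and> E = gram_vec (n+m) (concat_fam n a b)))
    \<and> (E \<in> elliptope (n+m)
      \<longleftrightarrow> (\<exists>d::nat. \<exists>A B. d \<ge> 1
               \<and> (\<forall>i<n. A i \<in> carrier_mat d d \<and> hermitian (A i)
                        \<and> A i * A i = (1 / of_nat d) \<cdot>\<^sub>m 1\<^sub>m d)
               \<and> (\<forall>j<m. B j \<in> carrier_mat d d \<and> hermitian (B j)
                        \<and> B j * B j = (1 / of_nat d) \<cdot>\<^sub>m 1\<^sub>m d)
               \<and> complex_of_mat E = gram_mat (n+m) (concat_fam n A B)))
    \<and> (E \<in> elliptope (n+m)
      \<longleftrightarrow> (\<exists>d::nat. \<exists>X Y K. d \<ge> 1
               \<and> (\<forall>i<n. X i \<in> carrier_mat d d \<and> hermitian (X i) \<and> X i * X i = 1\<^sub>m d)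
               \<and> (\<forall>j<m. Y j \<in> carrier_mat d d \<and> hermitian (Y j) \<and> Y j * Y j = 1\<^sub>m d)
               \<and> K \<in> carrier_mat d d \<and> hermitian K \<and> pos_def K \<and> mtrace (K * K) = 1
               \<and> complex_of_mat E =
                   gram_mat (n+m) (concat_fam n (\<lambda>i. K * X i) (\<lambda>j. Y j * K))))"
  (is "(?ell \<longleftrightarrow> ?a) \<and> (?ell \<longleftrightarrow> ?b) \<and> (?ell \<longleftrightarrow> ?c)")
proof -
  have ell_a: "?ell \<longleftrightarrow> ?a"
    unfolding elliptope_iff_gram_unit_vectors
    using ex_concat_fam_iff[where P = "\<lambda>v. v \<in> carrier_vec r \<and> v \<bullet> v = 1"
        and Q = "\<lambda>w. E = gram_vec (n + m) w" for r]
    by simp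
  have ell_bc: "?b \<and> ?c" if ?ell
  proof -
    obtain r w where w: "\<forall>k<n + m. w k \<in> carrier_vec r \<and> w k \<bullet> w k = 1"
      and E: "E = gram_vec (n + m) w"
      using \<open>?ell\<close> elliptope_iff_gram_unit_vectors by blast
    obtain d :: nat and \<Gamma> K where d: "d \<ge> 1"
      and \<Gamma>: "\<And>k. k < n + m \<Longrightarrow> \<Gamma> k \<in> carrier_mat d d \<and> hermitian (\<Gamma> k) \<and> \<Gamma> k * \<Gamma> k = 1\<^sub>m d"
      and A: "\<And>k. k < n + m \<Longrightarrow> K * \<Gamma> k \<in> carrier_mat d d \<and> hermitian (K * \<Gamma> k)
           \<and> (K * \<Gamma> k) * (K * \<Gamma> k) = (1 / of_nat d) \<cdot>\<^sub>m 1\<^sub>m d"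
      and K: "K \<in> carrier_mat d d" "hermitian K" "pos_def K" "mtrace (K * K) = 1"
      and comm: "\<And>k. \<Gamma> k * K = K * \<Gamma> k"
      and gram: "complex_of_mat E = gram_mat (n + m) (\<lambda>k. K * \<Gamma> k)"
      unfolding E by (rule unit_vectors_clifford_witnesses[OF w]) blast
    have "?b"
      using d A gram concat_fam_split[of n "\<lambda>k. K * \<Gamma> k"]
      by (intro exI[of _ d] exI[of _ "\<lambda>i. K * \<Gamma> i"] exI[of _ "\<lambda>j. K * \<Gamma> (n + j)"]) auto
    moreover have "?c"
      using d \<Gamma> K gram concat_fam_split[of n "\<lambda>k. K * \<Gamma> k"]
      by (intro exI[of _ d] exI[of _ \<Gamma>] exI[of _ "\<lambda>j. \<Gamma> (n + j)"] exI[of _ K]) (auto simp: comm)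
    ultimately show ?thesis ..
  qed
  have b_ell: ?ell if ?b
    using that
    by (elim exE conjE, intro gram_mat_concat_in_elliptope[OF assms])
      (auto intro: mtrace_mult_ctrans_square_scalar)
  have c_ell: ?ell if ?c
    using that
    by (elim exE conjE, intro gram_mat_concat_in_elliptope[OF assms])
      (auto simp: mtrace_weighted_involution intro: mult_carrier_mat)
  show ?thesis using ell_a ell_bc b_ell c_ell by blast
qed

end
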